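(* On $\mathcal A_{\mathcal G}$ the metrics $\mathrm a_{\mathcal G}$ and $\mathrm d_{\mathcal G}$ induce the same topology.
   Context: $(X,\Sigma,\mu)$ is a separable Lebesgue space with a non-atomic probability measure $\mu$. $\mathcal A$ is the group of invertible measure-preserving transformations of $X$, two transformations being identified if they agree outside a null set. Fix a countable family $\{A_i\}_{i\in\mathbb N}\subset\Sigma$ that generates $\Sigma$ and is dense in $\Sigma$ (for every $A\in\Sigma$ and $\varepsilon>0$ there is $i$ with $\mu(A_i\triangle A)<\varepsilon$). For $T,S\in\mathcal A$ put $\mathrm d(T,S)=\sum_{i}2^{-i}\big(\mu(TA_i\triangle SA_i)+\mu(T^{-1}A_i\triangle S^{-1}A_i)\big)$ and $\mathrm a(T,S)=\sum_{i,j}2^{-(i+j)}|\mu(TA_i\cap A_j)-\mu(SA_i\cap A_j)|$. $\mathcal G$ is a Hausdorff locally compact group with a countable neighborhood base. Fix an at most countable family $\{K_i\}$ of compact subsets of $\mathcal G$ with nonempty interiors whose union contains a set generating $\mathcal G$. An action of $\mathcal G$ is a family $T=\{T^g\}_{g\in\mathcal G}\subset\mathcal A$ with $T^gT^h=T^{gh}$ for all $g,h$ and such that $g\mapsto\mu(T^gA\cap B)$ is continuous for all $A,B\in\Sigma$. $\mathcal A_{\mathcal G}$ is the set of all actions; for $T,S\in\mathcal A_{\mathcal G}$, $\mathrm d_{\mathcal G}(T,S)=\sum_i 2^{-i}\sup_{g\in K_i}\mathrm d(T^g,S^g)$ and $\mathrm a_{\mathcal G}(T,S)=\sum_i 2^{-i}\sup_{g\in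 K_i}\mathrm a(T^g,S^g)$. *)

theory Defs
  imports "HOL-Analysis.Analysis" "HOL-Probability.Probability"
begin

definition nonatomic_lebesgue_space :: "'a measure \<Rightarrow> bool" where
  "nonatomic_lebesgue_space M \<longleftrightarrow> prob_space M \<and>
     (\<exists>N \<in> null_sets M. \<exists>N' \<in> null_sets (lebesgue_on {0..1::real}). \<exists>f.
        bij_betw f (space M - N) ({0..1} - N') \<and>
        (\<forall>A. A \<subseteq> space M - N \<longrightarrow> (A \<in> sets M \<longleftrightarrow> f ` A \<in> sets (lebesgue_on {0..1}))) \<and>
        (\<forall>A \<in> sets M. A \<subseteq> space M - N \<longrightarrow> measure M A = measure lebesgue (f ` A)))"

text \<open>Invertible measure-preserving transformations (representatives; classes are taken mod 0).\<close>
definition inv_mpt :: "'a measure \<Rightarrow> ('a \<Rightarrow> 'a) \<Rightarrow> bool" where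
  "inv_mpt M T \<longleftrightarrow> bij_betw T (space M) (space M) \<and> T \<in> measurable M M \<and>
     inv_into (space M) T \<in> measurable M M \<and> distr M M T = M"

definition dist_d :: "'a measure \<Rightarrow> (nat \<Rightarrow> 'a set) \<Rightarrow> ('a \<Rightarrow> 'a) \<Rightarrow> ('a \<Rightarrow> 'a) \<Rightarrow> real" where
  "dist_d M A T S = (\<Sum>i. (1/2)^i *
      (measure M ((T ` A i) \<union> (S ` A i) - (T ` A i) \<inter> (S ` A i)) +
       measure M ((T -` A i \<inter> space M) \<union> (S -` A i \<inter> space M)
                 - (T -` A i \<inter> space M) \<inter> (S -` A i \<inter> space M))))"

definition dist_a :: "'a measure \<Rightarrow> (nat \<Rightarrow> 'a set) \<Rightarrow> ('a \<Rightarrow> 'a) \<Rightarrow> ('a \<Rightarrow> 'a) \<Rightarrow> real" where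
  "dist_a M A T S = (\<Sum>i. \<Sum>j. (1/2)^(i+j) *
      \<bar>measure M (T ` A i \<inter> A j) - measure M (S ` A i \<inter> A j)\<bar>)"

definition generated_subgroup :: "'g::group_add set \<Rightarrow> 'g set" where
  "generated_subgroup S = \<Inter>{H. S \<subseteq> H \<and> 0 \<in> H \<and> (\<forall>x\<in>H. \<forall>y\<in>H. x + y \<in> H) \<and> (\<forall>x\<in>H. - x \<in> H)}"

definition is_action :: "'a measure \<Rightarrow> ('g::topological_group_add \<Rightarrow> 'a \<Rightarrow> 'a) \<Rightarrow> bool" where
  "is_action M T \<longleftrightarrow> (\<forall>g. inv_mpt M (T g)) \<and>
     (\<forall>g h. AE x in M. T g (T h x) = T (g + h) x) \<and>
     (\<forall>A\<in>sets M. \<forall>B\<in>sets M. continuous_on UNIV (\<lambda>g. measure M (T g ` A \<inter> B)))"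

definition dist_dG :: "'a measure \<Rightarrow> (nat \<Rightarrow> 'a set) \<Rightarrow> nat set \<Rightarrow> (nat \<Rightarrow> 'g set)
    \<Rightarrow> ('g \<Rightarrow> 'a \<Rightarrow> 'a) \<Rightarrow> ('g \<Rightarrow> 'a \<Rightarrow> 'a) \<Rightarrow> real" where
  "dist_dG M A I K T S = (\<Sum>i. if i \<in> I then (1/2)^i * (SUP g\<in>K i. dist_d M A (T g) (S g)) else 0)"

definition dist_aG :: "'a measure \<Rightarrow> (nat \<Rightarrow> 'a set) \<Rightarrow> nat set \<Rightarrow> (nat \<Rightarrow> 'g set)
    \<Rightarrow> ('g \<Rightarrow> 'a \<Rightarrow> 'a) \<Rightarrow> ('g \<Rightarrow> 'a \<Rightarrow> 'a) \<Rightarrow> real" where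
  "dist_aG M A I K T S = (\<Sum>i. if i \<in> I then (1/2)^i * (SUP g\<in>K i. dist_a M A (T g) (S g)) else 0)"

definition pm_open :: "'b set \<Rightarrow> ('b \<Rightarrow> 'b \<Rightarrow> real) \<Rightarrow> 'b set \<Rightarrow> bool" where
  "pm_open X \<rho> U \<longleftrightarrow> U \<subseteq> X \<and> (\<forall>x\<in>U. \<exists>e>0. \<forall>y\<in>X. \<rho> x y < e \<longrightarrow> y \<in> U)"

end

theory Submission
  imports Defs
begin

text \<open>
  Since \<open>|\<mu>(P \<inter> C) - \<mu>(Q \<inter> C)| \<le> \<mu>(P \<triangle> Q)\<close>, summing over \<open>C = A\<^sub>j\<close>
  gives \<open>a \<le> 2 d\<close> for single transformations and hence \<open>a\<^sub>G \<le> 2 d\<^sub>G\<close>.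
  Conversely, if \<open>\<mu> P = \<mu> Q\<close> then
  \<open>\<mu>(P \<triangle> Q) \<le> 4 \<mu>(P \<triangle> C) + 2 |\<mu>(P \<inter> C) - \<mu>(Q \<inter> C)|\<close>.
  Fix an action \<open>T\<close>. Choosing \<open>C = A\<^sub>j\<close> close to \<open>T\<^sup>g A\<^sub>k\<close>
  (resp. \<open>(T\<^sup>g)\<^sup>-\<^sup>1 A\<^sub>k\<close>) bounds the \<open>k\<close>-th term of \<open>d(T\<^sup>g, S\<^sup>g)\<close>
  by finitely many terms of \<open>a(T\<^sup>g, S\<^sup>g)\<close> up to a small error. Because
  \<open>g \<mapsto> \<mu>(T\<^sup>g A\<^sub>k \<triangle> A\<^sub>j)\<close> is continuous, finitely many \<open>j\<close> suffice uniformly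
  for \<open>g\<close> in the compact sets \<open>K\<^sub>1, \<dots>, K\<^sub>N\<close>, so a small \<open>a\<^sub>G(T, S)\<close> forces
  a small \<open>d\<^sub>G(T, S)\<close>. Only compactness and nonemptiness of the \<open>K\<^sub>i\<close>, density of
  \<open>{A\<^sub>i}\<close> and \<open>\<mu>(X) = 1\<close> are used.
\<close>

lemma inv_mpt_image:
  assumes "inv_mpt M T" "B \<in> sets M"
  shows "T ` B \<in> sets M" "measure M (T ` B) = measure M B"
proof -
  have bij: "bij_betw T (space M) (space M)" and Tm: "T \<in> measurable M M"
    and im: "inv_into (space M) T \<in> measurable M M" and d: "distr M M T = M"
    using assms(1) unfolding inv_mpt_def by auto
  have Bs: "B \<subseteq> space M" using sets.sets_into_space assms(2) by auto
  have image_eq: "T ` B = inv_into (space M) T -` B \<inter> space M"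
  proof
    show "T ` B \<subseteq> inv_into (space M) T -` B \<inter> space M"
      using bij Bs by (auto simp: bij_betw_def inv_into_f_f)
    show "inv_into (space M) T -` B \<inter> space M \<subseteq> T ` B"
    proof
      fix x assume x: "x \<in> inv_into (space M) T -` B \<inter> space M"
      then have "x = T (inv_into (space M) T x)"
        using bij by (auto simp: bij_betw_def f_inv_into_f)
      then show "x \<in> T ` B" using x by blast
    qed
  qed
  show sets: "T ` B \<in> sets M" unfolding image_eq using im assms(2) by (rule measurable_sets)
  have "T -` (T ` B) \<inter> space M = B"
    using bij Bs by (auto simp: bij_betw_def inj_on_def)
  moreover have "measure (distr M M T) (T ` B) = measure M (T -` (T ` B) \<inter> space M)"
    using Tm sets by (rule measure_distr)
  ultimately show "measure M (T ` B) = measure M B" using d by simp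
qed

lemma inv_mpt_vimage:
  assumes "inv_mpt M T" "B \<in> sets M"
  shows "T -` B \<inter> space M \<in> sets M" "measure M (T -` B \<inter> space M) = measure M B"
proof -
  have Tm: "T \<in> measurable M M" and d: "distr M M T = M"
    using assms(1) unfolding inv_mpt_def by auto
  show "T -` B \<inter> space M \<in> sets M" using Tm assms(2) by (rule measurable_sets)
  have "measure (distr M M T) B = measure M (T -` B \<inter> space M)"
    using Tm assms(2) by (rule measure_distr)
  then show "measure M (T -` B \<inter> space M) = measure M B" using d by simp
qed

lemma inv_mpt_measure_vimage_Int:
  assumes "inv_mpt M T" "B \<in> sets M" "C \<in> sets M"
  shows "measure M ((T -` B \<inter> space M) \<inter> C) = measure M (T ` C \<inter> B)"
proof -
  have "T ` ((T -` B \<inter> space M) \<inter> C) = T ` C \<inter> B"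
    using sets.sets_into_space[OF assms(3)] by auto
  moreover have "(T -` B \<inter> space M) \<inter> C \<in> sets M"
    using inv_mpt_vimage(1)[OF assms(1,2)] assms(3) by auto
  ultimately show ?thesis using inv_mpt_image(2)[OF assms(1)] by metis
qed

lemma is_action_inv_mpt: "is_action M T \<Longrightarrow> inv_mpt M (T g)"
  unfolding is_action_def by blast

lemma (in finite_measure) measure_sym_diff:
  assumes "P \<in> sets M" "Q \<in> sets M"
  shows "measure M (sym_diff P Q) = measure M P + measure M Q - 2 * measure M (P \<inter> Q)"
proof -
  have "measure M (sym_diff P Q) = measure M (P - Q) + measure M (Q - P)"
    using assms by (intro finite_measure_Union) auto
  moreover have "measure M (P - Q) = measure M P - measure M (P \<inter> Q)"
    and "measure M (Q - P) = measure M Q - measure M (P \<inter> Q)"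
    using assms by (simp_all add: finite_measure_Diff' Int_commute)
  ultimately show ?thesis by simp
qed

lemma (in finite_measure) measure_Int_diff_le_sym_diff:
  assumes "P \<in> sets M" "Q \<in> sets M" "C \<in> sets M"
  shows "\<bar>measure M (P \<inter> C) - measure M (Q \<inter> C)\<bar> \<le> measure M (sym_diff P Q)"
proof -
  have "measure M (X \<inter> C) \<le> measure M (Y \<inter> C) + measure M (sym_diff P Q)"
    if "X \<in> {P, Q}" "Y \<in> {P, Q}" for X Y
  proof -
    have "measure M (X \<inter> C) \<le> measure M ((Y \<inter> C) \<union> sym_diff P Q)"
      using assms that by (intro finite_measure_mono) auto
    also have "\<dots> \<le> measure M (Y \<inter> C) + measure M (sym_diff P Q)"
      using assms that by (intro measure_Un_le) auto
    finally show ?thesis .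
  qed
  from this[of P Q] this[of Q P] show ?thesis by (simp add: abs_le_iff)
qed

lemma (in finite_measure) measure_sym_diff_le_approx:
  assumes "P \<in> sets M" "Q \<in> sets M" "C \<in> sets M" "measure M P = measure M Q"
  shows "measure M (sym_diff P Q)
           \<le> 4 * measure M (sym_diff C P) + 2 * \<bar>measure M (P \<inter> C) - measure M (Q \<inter> C)\<bar>"
proof -
  have "\<bar>measure M (C \<inter> Q) - measure M (P \<inter> Q)\<bar> \<le> measure M (sym_diff C P)"
    by (rule measure_Int_diff_le_sym_diff[OF assms(3,1,2)])
  moreover have "\<bar>measure M (C \<inter> P) - measure M (P \<inter> P)\<bar> \<le> measure M (sym_diff C P)"
    by (rule measure_Int_diff_le_sym_diff[OF assms(3,1,1)])
  ultimately show ?thesis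
    using measure_sym_diff[OF assms(1,2)] assms(4)
      abs_ge_self[of "measure M (P \<inter> C) - measure M (Q \<inter> C)"]
    by (simp add: Int_commute abs_le_iff)
qed

lemma summable_half_powers_weighted:
  fixes f :: "nat \<Rightarrow> real"
  assumes "\<And>k. 0 \<le> f k" "\<And>k. f k \<le> c"
  shows "summable (\<lambda>k. (1/2)^k * f k)"
  by (rule summable_comparison_test[where g="\<lambda>k. c * (1/2)^k"])
     (use assms in \<open>auto intro!: exI[of _ 0] mult_right_mono summable_mult summable_geometric
                        simp: mult.commute\<close>)

lemma suminf_half_powers_weighted_le:
  fixes f :: "nat \<Rightarrow> real"
  assumes f0: "\<And>k. 0 \<le> f k" and fc: "\<And>k. f k \<le> c" and f\<eta>: "\<And>k. k < N \<Longrightarrow> f k \<le> \<eta>"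
    and \<eta>0: "0 \<le> \<eta>"
  shows "(\<Sum>k. (1/2)^k * f k) \<le> 2 * \<eta> + 2 * c * (1/2)^N"
proof -
  have s: "summable (\<lambda>k. (1/2::real)^k * f k)" using f0 fc by (rule summable_half_powers_weighted)
  have g: "summable (\<lambda>k. (1/2::real)^k)" by (rule summable_geometric) simp
  have gs: "(\<Sum>n. (1/2::real)^n) = 2" using suminf_geometric[of "1/2::real"] by simp
  have "(\<Sum>n. (1/2::real)^(n + N) * f (n + N)) \<le> (\<Sum>n. (c * (1/2)^N) * (1/2)^n)"
  proof (rule suminf_le)
    show "summable (\<lambda>n. (1/2::real)^(n + N) * f (n + N))"
      using summable_ignore_initial_segment[OF s, of N] by simp
    show "summable (\<lambda>n. (c * (1/2::real)^N) * (1/2)^n)" using g by (rule summable_mult)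
    show "(1/2::real)^(n + N) * f (n + N) \<le> (c * (1/2)^N) * (1/2)^n" for n
      using fc[of "n + N"] by (simp add: power_add mult_left_mono mult.commute mult.left_commute)
  qed
  also have "\<dots> = 2 * c * (1/2)^N" using suminf_mult[OF g, of "c * (1/2)^N"] gs by simp
  finally have tail: "(\<Sum>n. (1/2::real)^(n + N) * f (n + N)) \<le> 2 * c * (1/2)^N" .
  have "(\<Sum>k<N. (1/2::real)^k * f k) \<le> (\<Sum>k<N. \<eta> * (1/2)^k)"
    using f\<eta> by (intro sum_mono) (simp add: mult.commute mult_left_mono)
  also have "\<dots> = \<eta> * (\<Sum>k<N. (1/2::real)^k)" by (simp add: sum_distrib_left)
  also have "\<dots> \<le> \<eta> * 2"
    using sum_le_suminf[OF g, of "{..<N}"] gs \<eta>0 by (intro mult_left_mono) auto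
  finally have head: "(\<Sum>k<N. (1/2::real)^k * f k) \<le> 2 * \<eta>" by simp
  show ?thesis using suminf_split_initial_segment[OF s, of N] tail head by simp
qed

lemma suminf_term_le:
  fixes f :: "nat \<Rightarrow> real"
  assumes "summable f" "\<And>k. 0 \<le> f k"
  shows "f n \<le> suminf f"
  using sum_le_suminf[OF assms(1), of "{n}"] assms(2) by simp

lemma compact_uniform_index_bound:
  fixes f :: "nat \<Rightarrow> 'g::topological_space \<Rightarrow> real"
  assumes "\<And>j. continuous_on UNIV (f j)" "\<And>g. \<exists>j. f j g < e" "compact K"
  shows "\<exists>m. \<forall>g\<in>K. \<exists>j\<le>m. f j g < e"
proof -
  have "open {g. f j g < e}" for j
    using open_Collect_less[OF assms(1) continuous_on_const] .
  moreover have "K \<subseteq> (\<Union>j. {g. f j g < e})" using assms(2) by auto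
  ultimately obtain C where C: "finite C" "K \<subseteq> (\<Union>j\<in>C. {g. f j g < e})"
    by (metis compactE_image[OF assms(3)])
  moreover obtain m where "\<forall>j\<in>C. j \<le> m"
    using C(1) finite_nat_set_iff_bounded_le by blast
  ultimately show ?thesis by blast
qed

lemma ex_common_bound:
  fixes N :: nat
  assumes "\<And>k. k < N \<Longrightarrow> \<exists>m::nat. P k m" "\<And>k m m'. m \<le> m' \<Longrightarrow> P k m \<Longrightarrow> P k m'"
  shows "\<exists>m. \<forall>k<N. P k m"
proof -
  obtain m where m: "\<And>k. k < N \<Longrightarrow> P k (m k)" using assms(1) by metis
  have "m k \<le> Max (m ` {..<N})" if "k < N" for k using that by simp
  then show ?thesis using m assms(2) by blast
qed

lemma pm_open_transfer:
  assumes "\<And>x e. x \<in> X \<Longrightarrow> e > 0 \<Longrightarrow> \<exists>d>0. \<forall>y\<in>X. \<rho> x y < d \<longrightarrow> \<sigma> x y < e"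
    and "pm_open X \<sigma> U"
  shows "pm_open X \<rho> U"
  unfolding pm_open_def
proof (intro conjI ballI)
  show "U \<subseteq> X" using assms(2) unfolding pm_open_def by blast
  fix x assume "x \<in> U"
  then obtain e where "e > 0" "\<forall>y\<in>X. \<sigma> x y < e \<longrightarrow> y \<in> U"
    using assms(2) unfolding pm_open_def by blast
  moreover obtain d where "d > 0" "\<forall>y\<in>X. \<rho> x y < d \<longrightarrow> \<sigma> x y < e"
    using assms(1) \<open>x \<in> U\<close> \<open>U \<subseteq> X\<close> \<open>e > 0\<close> by blast
  ultimately show "\<exists>d>0. \<forall>y\<in>X. \<rho> x y < d \<longrightarrow> y \<in> U" by blast
qed

definition dist_d_summand
    :: "'a measure \<Rightarrow> (nat \<Rightarrow> 'a set) \<Rightarrow> ('a \<Rightarrow> 'a) \<Rightarrow> ('a \<Rightarrow> 'a) \<Rightarrow> nat \<Rightarrow> real"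
  where "dist_d_summand M A T S i =
           measure M (sym_diff (T ` A i) (S ` A i)) +
           measure M (sym_diff (T -` A i \<inter> space M) (S -` A i \<inter> space M))"

definition dist_a_summand
    :: "'a measure \<Rightarrow> (nat \<Rightarrow> 'a set) \<Rightarrow> ('a \<Rightarrow> 'a) \<Rightarrow> ('a \<Rightarrow> 'a) \<Rightarrow> nat \<Rightarrow> nat \<Rightarrow> real"
  where "dist_a_summand M A T S i j = \<bar>measure M (T ` A i \<inter> A j) - measure M (S ` A i \<inter> A j)\<bar>"

definition dist_a_row
    :: "'a measure \<Rightarrow> (nat \<Rightarrow> 'a set) \<Rightarrow> ('a \<Rightarrow> 'a) \<Rightarrow> ('a \<Rightarrow> 'a) \<Rightarrow> nat \<Rightarrow> real"
  where "dist_a_row M A T S i = (\<Sum>j. (1/2)^j * dist_a_summand M A T S i j)"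

definition sup_profile :: "nat set \<Rightarrow> (nat \<Rightarrow> 'g set) \<Rightarrow> ('g \<Rightarrow> real) \<Rightarrow> nat \<Rightarrow> real"
  where "sup_profile I K f i = (if i \<in> I then (SUP g\<in>K i. f g) else 0)"

lemma dist_d_eq_suminf_summands: "dist_d M A T S = (\<Sum>i. (1/2)^i * dist_d_summand M A T S i)"
proof -
  have "P \<union> Q - P \<inter> Q = sym_diff P Q" for P Q :: "'a set" by auto
  then show ?thesis unfolding dist_d_def dist_d_summand_def by presburger
qed

lemma dist_dG_eq_suminf_sup_profile:
  "dist_dG M A I K T S = (\<Sum>i. (1/2)^i * sup_profile I K (\<lambda>g. dist_d M A (T g) (S g)) i)"
  unfolding dist_dG_def sup_profile_def by (rule suminf_cong) simp

lemma dist_aG_eq_suminf_sup_profile: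
  "dist_aG M A I K T S = (\<Sum>i. (1/2)^i * sup_profile I K (\<lambda>g. dist_a M A (T g) (S g)) i)"
  unfolding dist_aG_def sup_profile_def by (rule suminf_cong) simp

lemma sup_profile_upper:
  assumes "\<And>g. f g \<le> c" "i \<in> I" "g \<in> K i"
  shows "f g \<le> sup_profile I K f i"
  using assms unfolding sup_profile_def by (auto intro!: cSUP_upper bdd_aboveI)

lemma sup_profile_le:
  assumes "\<And>i. i \<in> I \<Longrightarrow> K i \<noteq> {}" "\<And>g. i \<in> I \<Longrightarrow> g \<in> K i \<Longrightarrow> f g \<le> b" "0 \<le> b"
  shows "sup_profile I K f i \<le> b"
  using assms unfolding sup_profile_def by (auto intro!: cSUP_least)

lemma sup_profile_bounds:
  assumes "\<And>i. i \<in> I \<Longrightarrow> K i \<noteq> {}" "\<And>g. 0 \<le> f g" "\<And>g. f g \<le> c"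
  shows "0 \<le> sup_profile I K f i" "sup_profile I K f i \<le> c"
proof -
  have "0 \<le> c" using assms(2,3) by (meson order_trans)
  show "sup_profile I K f i \<le> c"
    by (rule sup_profile_le) (use assms \<open>0 \<le> c\<close> in auto)
  show "0 \<le> sup_profile I K f i"
  proof (cases "i \<in> I")
    case True
    then obtain g where "g \<in> K i" using assms(1) by blast
    with True have "f g \<le> sup_profile I K f i" by (intro sup_profile_upper[where c=c] assms(3))
    then show ?thesis using assms(2)[of g] by linarith
  qed (simp add: sup_profile_def)
qed

context prob_space
begin

lemma dist_d_summand_bounds: "0 \<le> dist_d_summand M A T S i" "dist_d_summand M A T S i \<le> 2"
  unfolding dist_d_summand_def using add_mono[OF prob_le_1 prob_le_1] by simp_all

lemma dist_a_summand_bounds: "0 \<le> dist_a_summand M A T S i j" "dist_a_summand M A T S i j \<le> 1"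
proof -
  have "0 \<le> prob X" "prob X \<le> 1" for X by simp_all
  then show "0 \<le> dist_a_summand M A T S i j" "dist_a_summand M A T S i j \<le> 1"
    unfolding dist_a_summand_def abs_le_iff by (simp, smt (verit))
qed

lemma summable_dist_a_summands: "summable (\<lambda>j. (1/2)^j * dist_a_summand M A T S i j)"
  using dist_a_summand_bounds by (rule summable_half_powers_weighted)

lemma dist_a_row_bounds: "0 \<le> dist_a_row M A T S i" "dist_a_row M A T S i \<le> 2"
  unfolding dist_a_row_def
  using suminf_nonneg[OF summable_dist_a_summands] dist_a_summand_bounds
    suminf_half_powers_weighted_le[of "dist_a_summand M A T S i" 1 0 0]
  by simp_all

lemma dist_a_eq_suminf_rows: "dist_a M A T S = (\<Sum>i. (1/2)^i * dist_a_row M A T S i)"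
proof -
  have "(\<Sum>j. (1/2::real)^(i + j) * dist_a_summand M A T S i j) = (1/2)^i * dist_a_row M A T S i"
    for i
    unfolding dist_a_row_def power_add mult.assoc by (rule suminf_mult[OF summable_dist_a_summands])
  then show ?thesis unfolding dist_a_def dist_a_summand_def by simp
qed

lemma dist_a_bounds: "0 \<le> dist_a M A T S" "dist_a M A T S \<le> 4"
  unfolding dist_a_eq_suminf_rows
  using suminf_nonneg[OF summable_half_powers_weighted[OF dist_a_row_bounds]] dist_a_row_bounds
    suminf_half_powers_weighted_le[of "dist_a_row M A T S" 2 0 0]
  by simp_all

lemma dist_d_le_of_summands_le:
  assumes "\<And>k. k < N \<Longrightarrow> dist_d_summand M A T S k \<le> \<eta>" "0 \<le> \<eta>"
  shows "dist_d M A T S \<le> 2 * \<eta> + 4 * (1/2)^N"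
  using suminf_half_powers_weighted_le[of "dist_d_summand M A T S" 2 N \<eta>] dist_d_summand_bounds assms
  unfolding dist_d_eq_suminf_summands by simp

lemma dist_d_bounds: "0 \<le> dist_d M A T S" "dist_d M A T S \<le> 4"
  using suminf_nonneg[OF summable_half_powers_weighted, of "dist_d_summand M A T S" 2]
    dist_d_summand_bounds dist_d_le_of_summands_le[where N=0 and \<eta>=0]
  by (simp_all add: dist_d_eq_suminf_summands)

lemma dist_a_summand_le_dist_a: "(1/2)^(i + j) * dist_a_summand M A T S i j \<le> dist_a M A T S"
proof -
  have "(1/2)^j * dist_a_summand M A T S i j \<le> dist_a_row M A T S i"
    unfolding dist_a_row_def
    using summable_dist_a_summands dist_a_summand_bounds by (intro suminf_term_le) auto
  then have "(1/2)^(i + j) * dist_a_summand M A T S i j \<le> (1/2)^i * dist_a_row M A T S i"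
    unfolding power_add mult.assoc by (intro mult_left_mono) auto
  also have "\<dots> \<le> dist_a M A T S"
    unfolding dist_a_eq_suminf_rows using dist_a_row_bounds
    by (intro suminf_term_le summable_half_powers_weighted) auto
  finally show ?thesis .
qed

lemma dist_a_summand_le_dist_d_summand:
  assumes "inv_mpt M T" "inv_mpt M S" "\<And>i. A i \<in> sets M"
  shows "dist_a_summand M A T S i j \<le> dist_d_summand M A T S i"
  using measure_Int_diff_le_sym_diff[OF inv_mpt_image(1)[OF assms(1,3)] inv_mpt_image(1)[OF assms(2,3)] assms(3)]
  unfolding dist_a_summand_def dist_d_summand_def by (smt (verit) measure_nonneg)

lemma dist_a_le_dist_d:
  assumes "inv_mpt M T" "inv_mpt M S" "\<And>i. A i \<in> sets M"
  shows "dist_a M A T S \<le> 2 * dist_d M A T S"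
proof -
  have row_le: "dist_a_row M A T S i \<le> 2 * dist_d_summand M A T S i" for i
    using suminf_half_powers_weighted_le[of "dist_a_summand M A T S i" "dist_d_summand M A T S i" 0 0]
      dist_a_summand_bounds dist_a_summand_le_dist_d_summand[OF assms]
    unfolding dist_a_row_def by simp
  have d_sum: "summable (\<lambda>i. (1/2)^i * dist_d_summand M A T S i)"
    using dist_d_summand_bounds by (rule summable_half_powers_weighted)
  have "(\<Sum>i. (1/2)^i * dist_a_row M A T S i) \<le> (\<Sum>i. 2 * ((1/2)^i * dist_d_summand M A T S i))"
  proof (rule suminf_le)
    show "(1/2)^i * dist_a_row M A T S i \<le> 2 * ((1/2)^i * dist_d_summand M A T S i)" for i
      using mult_left_mono[OF row_le[of i], of "(1/2)^i"] by (simp add: mult.left_commute)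
    show "summable (\<lambda>i. (1/2)^i * dist_a_row M A T S i)"
      using dist_a_row_bounds by (rule summable_half_powers_weighted)
    show "summable (\<lambda>i. 2 * ((1/2)^i * dist_d_summand M A T S i))"
      using d_sum by (rule summable_mult)
  qed
  also have "\<dots> = 2 * dist_d M A T S"
    unfolding dist_d_eq_suminf_summands using d_sum by (rule suminf_mult)
  finally show ?thesis unfolding dist_a_eq_suminf_rows .
qed

lemma dist_aG_le_dist_dG:
  assumes "\<And>i. i \<in> I \<Longrightarrow> K i \<noteq> {}" "\<And>g. inv_mpt M (T g)" "\<And>g. inv_mpt M (S g)"
    "\<And>i. A i \<in> sets M"
  shows "dist_aG M A I K T S \<le> 2 * dist_dG M A I K T S"
proof -
  let ?a = "sup_profile I K (\<lambda>g. dist_a M A (T g) (S g))"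
  let ?d = "sup_profile I K (\<lambda>g. dist_d M A (T g) (S g))"
  note a_bounds = sup_profile_bounds[where f="\<lambda>g. dist_a M A (T g) (S g)", OF assms(1) dist_a_bounds]
  note d_bounds = sup_profile_bounds[where f="\<lambda>g. dist_d M A (T g) (S g)", OF assms(1) dist_d_bounds]
  have d_le: "\<And>g. dist_d M A (T g) (S g) \<le> 4" by (rule dist_d_bounds)
  have a_le_d: "?a i \<le> 2 * ?d i" for i
  proof (rule sup_profile_le[OF assms(1)])
    fix g assume "i \<in> I" "g \<in> K i"
    have "dist_a M A (T g) (S g) \<le> 2 * dist_d M A (T g) (S g)"
      using assms(2-4) by (rule dist_a_le_dist_d)
    also have "\<dots> \<le> 2 * ?d i"
      by (simp, rule sup_profile_upper, rule d_le, fact+)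
    finally show "dist_a M A (T g) (S g) \<le> 2 * ?d i" .
  qed (use d_bounds in auto)
  have d_sum: "summable (\<lambda>i. (1/2)^i * ?d i)"
    by (rule summable_half_powers_weighted[OF d_bounds])
  have "(\<Sum>i. (1/2)^i * ?a i) \<le> (\<Sum>i. 2 * ((1/2)^i * ?d i))"
  proof (rule suminf_le)
    show "(1/2)^i * ?a i \<le> 2 * ((1/2)^i * ?d i)" for i
      using mult_left_mono[OF a_le_d[of i], of "(1/2)^i"] by (simp add: mult.left_commute)
  qed (use summable_half_powers_weighted[OF a_bounds] d_sum summable_mult in auto)
  also have "\<dots> = 2 * (\<Sum>i. (1/2)^i * ?d i)"
    using d_sum by (rule suminf_mult)
  finally show ?thesis unfolding dist_aG_eq_suminf_sup_profile dist_dG_eq_suminf_sup_profile .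
qed

lemma dist_a_summand_le_dist_aG:
  assumes "\<And>i. i \<in> I \<Longrightarrow> K i \<noteq> {}" "i \<in> I" "g \<in> K i"
  shows "dist_a_summand M A (T g) (S g) k j \<le> 2^(i + k + j) * dist_aG M A I K T S"
proof -
  let ?a = "sup_profile I K (\<lambda>g. dist_a M A (T g) (S g))"
  note a_bounds = sup_profile_bounds[where f="\<lambda>g. dist_a M A (T g) (S g)", OF assms(1) dist_a_bounds]
  have "(1/2)^(k + j) * dist_a_summand M A (T g) (S g) k j \<le> dist_a M A (T g) (S g)"
    by (rule dist_a_summand_le_dist_a)
  also have "\<dots> \<le> ?a i"
    using dist_a_bounds assms(2,3) by (intro sup_profile_upper) auto
  finally have "(1/2)^i * ((1/2)^(k + j) * dist_a_summand M A (T g) (S g) k j) \<le> (1/2)^i * ?a i"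
    by (intro mult_left_mono) auto
  also have "\<dots> \<le> dist_aG M A I K T S"
    unfolding dist_aG_eq_suminf_sup_profile
    using summable_half_powers_weighted[OF a_bounds] a_bounds by (intro suminf_term_le) auto
  finally have "(1/2)^(i + k + j) * dist_a_summand M A (T g) (S g) k j \<le> dist_aG M A I K T S"
    by (simp add: power_add mult.assoc)
  then show ?thesis by (simp add: field_simps power_one_over)
qed

lemma dist_a_summand_less_if_dist_aG_less:
  assumes "\<And>i. i \<in> I \<Longrightarrow> K i \<noteq> {}" "i \<in> I" "g \<in> K i" "i + k + j \<le> n"
    and "dist_aG M A I K T S < e / 2^n" "0 < e"
  shows "dist_a_summand M A (T g) (S g) k j < e"
proof -
  have "dist_a_summand M A (T g) (S g) k j \<le> 2^(i + k + j) * dist_aG M A I K T S"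
    using assms(1-3) by (rule dist_a_summand_le_dist_aG)
  also have "\<dots> < 2^(i + k + j) * (e / 2^n)" using assms(5) by (intro mult_strict_left_mono) auto
  also have "\<dots> \<le> 2^n * (e / 2^n)"
    using assms(4,6) by (intro mult_right_mono power_increasing) auto
  finally show ?thesis by simp
qed

lemma dist_dG_le_of_dist_d_le:
  assumes "\<And>i. i \<in> I \<Longrightarrow> K i \<noteq> {}"
    and "\<And>i g. i < N \<Longrightarrow> i \<in> I \<Longrightarrow> g \<in> K i \<Longrightarrow> dist_d M A (T g) (S g) \<le> \<eta>" "0 \<le> \<eta>"
  shows "dist_dG M A I K T S \<le> 2 * \<eta> + 8 * (1/2)^N"
proof -
  let ?d = "sup_profile I K (\<lambda>g. dist_d M A (T g) (S g))"
  have "?d i \<le> \<eta>" if "i < N" for i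
    using assms that by (intro sup_profile_le) auto
  then show ?thesis
    unfolding dist_dG_eq_suminf_sup_profile
    using suminf_half_powers_weighted_le[of ?d 4 N \<eta>] assms(3)
      sup_profile_bounds[where f="\<lambda>g. dist_d M A (T g) (S g)", OF assms(1) dist_d_bounds]
    by simp
qed

lemma action_measure_sym_diff_image_continuous:
  assumes "is_action M T" "B \<in> sets M" "C \<in> sets M"
  shows "continuous_on UNIV (\<lambda>g. prob (sym_diff C (T g ` B)))"
proof -
  have "prob (sym_diff C (T g ` B)) = prob C + prob B - 2 * prob (T g ` B \<inter> C)" for g
    using measure_sym_diff[OF assms(3) inv_mpt_image(1)[OF is_action_inv_mpt[OF assms(1)] assms(2)]]
      inv_mpt_image(2)[OF is_action_inv_mpt[OF assms(1)] assms(2)]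
    by (simp add: Int_commute)
  moreover have "continuous_on UNIV (\<lambda>g. prob (T g ` B \<inter> C))"
    using assms unfolding is_action_def by blast
  ultimately show ?thesis by (simp add: continuous_intros)
qed

text \<open>
  The inverse part of the action is controlled through \<open>\<mu>(T\<^sup>-\<^sup>1 B \<inter> C) = \<mu>(B \<inter> T C)\<close>,
  never through \<open>(T\<^sup>g)\<^sup>-\<^sup>1 = T\<^sup>-\<^sup>g\<close>, which the actions only satisfy almost everywhere.
\<close>
lemma action_measure_sym_diff_vimage_continuous:
  assumes "is_action M T" "B \<in> sets M" "C \<in> sets M"
  shows "continuous_on UNIV (\<lambda>g. prob (sym_diff C (T g -` B \<inter> space M)))"
proof -
  have "prob (sym_diff C (T g -` B \<inter> space M)) = prob C + prob B - 2 * prob (T g ` C \<inter> B)" for g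
    using measure_sym_diff[OF assms(3) inv_mpt_vimage(1)[OF is_action_inv_mpt[OF assms(1)] assms(2)]]
      inv_mpt_vimage(2)[OF is_action_inv_mpt[OF assms(1)] assms(2)]
      inv_mpt_measure_vimage_Int[OF is_action_inv_mpt[OF assms(1)] assms(2,3)]
    by (simp add: Int_commute)
  moreover have "continuous_on UNIV (\<lambda>g. prob (T g ` C \<inter> B))"
    using assms unfolding is_action_def by blast
  ultimately show ?thesis by (simp add: continuous_intros)
qed

lemma action_uniform_approx:
  fixes T :: "'g::topological_group_add \<Rightarrow> 'a \<Rightarrow> 'a" and A :: "nat \<Rightarrow> 'a set"
  assumes "is_action M T" "compact K" "e > 0"
    and A: "\<And>i. A i \<in> sets M"
    and dense: "\<And>B e. B \<in> sets M \<Longrightarrow> e > 0 \<Longrightarrow> \<exists>i. prob (sym_diff (A i) B) < e"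
  shows "\<exists>m. \<forall>k<N. \<forall>g\<in>K. (\<exists>j\<le>m. prob (sym_diff (A j) (T g ` A k)) < e)
                        \<and> (\<exists>j\<le>m. prob (sym_diff (A j) (T g -` A k \<inter> space M)) < e)"
proof (rule ex_common_bound)
  fix k
  have T: "inv_mpt M (T g)" for g using assms(1) by (rule is_action_inv_mpt)
  obtain m1 where m1: "\<forall>g\<in>K. \<exists>j\<le>m1. prob (sym_diff (A j) (T g ` A k)) < e"
    using compact_uniform_index_bound[where f="\<lambda>j g. prob (sym_diff (A j) (T g ` A k))",
        OF action_measure_sym_diff_image_continuous[OF assms(1) A A]
        dense[OF inv_mpt_image(1)[OF T A] assms(3)] assms(2)] by blast
  obtain m2 where m2: "\<forall>g\<in>K. \<exists>j\<le>m2. prob (sym_diff (A j) (T g -` A k \<inter> space M)) < e"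
    using compact_uniform_index_bound[where f="\<lambda>j g. prob (sym_diff (A j) (T g -` A k \<inter> space M))",
        OF action_measure_sym_diff_vimage_continuous[OF assms(1) A A]
        dense[OF inv_mpt_vimage(1)[OF T A] assms(3)] assms(2)] by blast
  show "\<exists>m. \<forall>g\<in>K. (\<exists>j\<le>m. prob (sym_diff (A j) (T g ` A k)) < e)
                  \<and> (\<exists>j\<le>m. prob (sym_diff (A j) (T g -` A k \<inter> space M)) < e)"
  proof (rule exI[of _ "max m1 m2"], intro ballI conjI)
    fix g assume "g \<in> K"
    with m1 m2 obtain j1 j2 where "j1 \<le> m1" "prob (sym_diff (A j1) (T g ` A k)) < e"
      and "j2 \<le> m2" "prob (sym_diff (A j2) (T g -` A k \<inter> space M)) < e"
      by blast
    then show "\<exists>j\<le>max m1 m2. prob (sym_diff (A j) (T g ` A k)) < e"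
      and "\<exists>j\<le>max m1 m2. prob (sym_diff (A j) (T g -` A k \<inter> space M)) < e"
      by (auto simp: le_max_iff_disj)
  qed
next
  fix k m m' :: nat
  assume "m \<le> m'" "\<forall>g\<in>K. (\<exists>j\<le>m. prob (sym_diff (A j) (T g ` A k)) < e)
                  \<and> (\<exists>j\<le>m. prob (sym_diff (A j) (T g -` A k \<inter> space M)) < e)"
  then show "\<forall>g\<in>K. (\<exists>j\<le>m'. prob (sym_diff (A j) (T g ` A k)) < e)
                  \<and> (\<exists>j\<le>m'. prob (sym_diff (A j) (T g -` A k \<inter> space M)) < e)"
    using order_trans by blast
qed

lemma dist_d_summand_le_approx:
  assumes T: "inv_mpt M T" and S: "inv_mpt M S" and A: "\<And>i. A i \<in> sets M"
  shows "dist_d_summand M A T S k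
           \<le> 4 * prob (sym_diff (A j) (T ` A k)) + 2 * dist_a_summand M A T S k j
             + 4 * prob (sym_diff (A j') (T -` A k \<inter> space M)) + 2 * dist_a_summand M A T S j' k"
proof -
  have "prob (sym_diff (T ` A k) (S ` A k))
          \<le> 4 * prob (sym_diff (A j) (T ` A k)) + 2 * dist_a_summand M A T S k j"
    using measure_sym_diff_le_approx[OF inv_mpt_image(1)[OF T A] inv_mpt_image(1)[OF S A] A]
      inv_mpt_image(2)[OF T A] inv_mpt_image(2)[OF S A]
    unfolding dist_a_summand_def by simp
  moreover have "prob (sym_diff (T -` A k \<inter> space M) (S -` A k \<inter> space M))
          \<le> 4 * prob (sym_diff (A j') (T -` A k \<inter> space M)) + 2 * dist_a_summand M A T S j' k"
    using measure_sym_diff_le_approx[OF inv_mpt_vimage(1)[OF T A] inv_mpt_vimage(1)[OF S A] A]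
      inv_mpt_vimage(2)[OF T A] inv_mpt_vimage(2)[OF S A]
      inv_mpt_measure_vimage_Int[OF T A A] inv_mpt_measure_vimage_Int[OF S A A]
    unfolding dist_a_summand_def by simp
  ultimately show ?thesis unfolding dist_d_summand_def by simp
qed

lemma dist_dG_small_if_dist_aG_small:
  fixes T :: "'g::topological_group_add \<Rightarrow> 'a \<Rightarrow> 'a" and A :: "nat \<Rightarrow> 'a set"
  assumes A: "\<And>i. A i \<in> sets M"
    and dense: "\<And>B e. B \<in> sets M \<Longrightarrow> e > 0 \<Longrightarrow> \<exists>i. prob (sym_diff (A i) B) < e"
    and K: "\<And>i. i \<in> I \<Longrightarrow> compact (K i)" "\<And>i. i \<in> I \<Longrightarrow> K i \<noteq> {}"
    and T: "is_action M T" and "\<epsilon> > 0"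
  shows "\<exists>\<delta>>0. \<forall>S. is_action M S \<longrightarrow> dist_aG M A I K T S < \<delta> \<longrightarrow> dist_dG M A I K T S < \<epsilon>"
proof -
  obtain N where N: "(1/2::real)^N < \<epsilon>/32"
    using real_arch_pow_inv[of "\<epsilon>/32" "1/2"] \<open>\<epsilon> > 0\<close> by auto
  define \<eta> where "\<eta> = \<epsilon>/16"
  have "\<eta> > 0" using \<open>\<epsilon> > 0\<close> by (simp add: \<eta>_def)
  define KN where "KN = (\<Union>i\<in>I \<inter> {..<N}. K i)"
  have "compact KN" unfolding KN_def using K(1) by (intro compact_UN) auto
  moreover have "\<eta>/16 > 0" using \<open>\<eta> > 0\<close> by simp
  ultimately obtain m where m: "\<forall>k<N. \<forall>g\<in>KN.
      (\<exists>j\<le>m. prob (sym_diff (A j) (T g ` A k)) < \<eta>/16) \<and>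
      (\<exists>j\<le>m. prob (sym_diff (A j) (T g -` A k \<inter> space M)) < \<eta>/16)"
    using action_uniform_approx[OF T _ _ A dense] by blast
  define \<delta> where "\<delta> = \<eta> / 8 / 2^(N + N + m)"
  have "\<delta> > 0" unfolding \<delta>_def using \<open>\<eta> > 0\<close> by simp
  show ?thesis
  proof (intro exI[of _ \<delta>] conjI allI impI \<open>\<delta> > 0\<close>)
    fix S assume S: "is_action M S" and aG: "dist_aG M A I K T S < \<delta>"
    have d_small: "dist_d_summand M A (T g) (S g) k \<le> \<eta>"
      if "i < N" "i \<in> I" "g \<in> K i" "k < N" for i g k
    proof -
      have "g \<in> KN" using that unfolding KN_def by auto
      then obtain j j' where j: "j \<le> m" "prob (sym_diff (A j) (T g ` A k)) < \<eta>/16"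
        and j': "j' \<le> m" "prob (sym_diff (A j') (T g -` A k \<inter> space M)) < \<eta>/16"
        using m \<open>k < N\<close> by blast
      have "dist_d_summand M A (T g) (S g) k
          \<le> 4 * prob (sym_diff (A j) (T g ` A k)) + 2 * dist_a_summand M A (T g) (S g) k j
            + 4 * prob (sym_diff (A j') (T g -` A k \<inter> space M))
            + 2 * dist_a_summand M A (T g) (S g) j' k"
        using is_action_inv_mpt[OF T] is_action_inv_mpt[OF S] A by (rule dist_d_summand_le_approx)
      moreover have "dist_a_summand M A (T g) (S g) k j < \<eta>/8"
        by (rule dist_a_summand_less_if_dist_aG_less[OF K(2) that(2,3) _ aG[unfolded \<delta>_def]])
           (use that j(1) \<open>\<eta> > 0\<close> in auto)
      moreover have "dist_a_summand M A (T g) (S g) j' k < \<eta>/8"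
        by (rule dist_a_summand_less_if_dist_aG_less[OF K(2) that(2,3) _ aG[unfolded \<delta>_def]])
           (use that j'(1) \<open>\<eta> > 0\<close> in auto)
      ultimately show ?thesis using j(2) j'(2) by linarith
    qed
    have "dist_d M A (T g) (S g) \<le> 2 * \<eta> + 4 * (1/2)^N" if "i < N" "i \<in> I" "g \<in> K i" for i g
      using d_small[OF that] \<open>\<eta> > 0\<close> by (intro dist_d_le_of_summands_le) auto
    then have "dist_dG M A I K T S \<le> 2 * (2 * \<eta> + 4 * (1/2)^N) + 8 * (1/2)^N"
      using K(2) \<open>\<eta> > 0\<close> by (intro dist_dG_le_of_dist_d_le) auto
    also have "\<dots> < \<epsilon>" using N \<open>\<epsilon> > 0\<close> by (simp add: \<eta>_def)
    finally show "dist_dG M A I K T S < \<epsilon>" .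
  qed
qed

end

theorem mainTheorem8:
  fixes M :: "'a measure" and A :: "nat \<Rightarrow> 'a set"
    and I :: "nat set" and K :: "nat \<Rightarrow> 'g::{topological_group_add, t2_space, first_countable_topology} set"
  assumes "nonatomic_lebesgue_space M"
    and "\<And>i. A i \<in> sets M"
    and "\<And>B. B \<in> sets M \<Longrightarrow> \<exists>C \<in> sigma_sets (space M) (range A). (B - C) \<union> (C - B) \<in> null_sets M"
    and "\<And>B e. B \<in> sets M \<Longrightarrow> e > 0 \<Longrightarrow> \<exists>i. measure M ((A i - B) \<union> (B - A i)) < e"
    and "locally_compact_space (euclidean :: 'g topology)"
    and "\<And>i. i \<in> I \<Longrightarrow> compact (K i) \<and> interior (K i) \<noteq> {}"
    and "\<exists>S \<subseteq> (\<Union>i\<in>I. K i). generated_subgroup S = UNIV"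
  shows "pm_open {T. is_action M T} (dist_aG M A I K) U
           \<longleftrightarrow> pm_open {T. is_action M T} (dist_dG M A I K) U"
proof -
  interpret prob_space M using assms(1) unfolding nonatomic_lebesgue_space_def by blast
  have K: "\<And>i. i \<in> I \<Longrightarrow> compact (K i)" "\<And>i. i \<in> I \<Longrightarrow> K i \<noteq> {}"
    using assms(6) interior_subset by blast+
  have a_by_d: "\<exists>d>0. \<forall>S\<in>{T. is_action M T}. dist_dG M A I K T S < d \<longrightarrow> dist_aG M A I K T S < e"
    if "T \<in> {T. is_action M T}" "e > 0" for T e
  proof (intro exI[of _ "e/2"] conjI ballI impI)
    fix S assume "S \<in> {T. is_action M T}" "dist_dG M A I K T S < e/2"
    moreover have "dist_aG M A I K T S \<le> 2 * dist_dG M A I K T S"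
      using K(2) is_action_inv_mpt that(1) \<open>S \<in> _\<close> assms(2) by (intro dist_aG_le_dist_dG) auto
    ultimately show "dist_aG M A I K T S < e" by simp
  qed (use that in simp)
  have d_by_a: "\<exists>d>0. \<forall>S\<in>{T. is_action M T}. dist_aG M A I K T S < d \<longrightarrow> dist_dG M A I K T S < e"
    if "T \<in> {T. is_action M T}" "e > 0" for T e
    using dist_dG_small_if_dist_aG_small[OF assms(2,4) K] that by auto
  show ?thesis
    using pm_open_transfer[of "{T. is_action M T}" "dist_dG M A I K" "dist_aG M A I K" U]
      pm_open_transfer[of "{T. is_action M T}" "dist_aG M A I K" "dist_dG M A I K" U]
      a_by_d d_by_a
    by blast
qed

end
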